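(* Let $\alpha\ge1$, let $n,m,k$ be integers with $2\le m\le k<n$, and let $\mathcal{A}$ be any single-pass streaming algorithm with memory $m$. Then for all sufficiently large $T$, there is an instance $\nu\in\mathcal{I}\cup\mathcal{I}'$ (defined in the context, with $\varepsilon=\frac14(k/T)^{\frac{1}{2+2\alpha}}$) on which $$\mathbb{E}_\nu[R(T)] > \frac{2}{16^{\alpha+1}}\cdot\frac{(k-m+1)\,T^{\frac{1}{\alpha+1}}}{k^{1+\frac{1}{\alpha+1}}}\sum_{i:\Delta_i(\nu)>0}\Delta_i(\nu)^{1-2\alpha}.$$ In particular the expected regret of $\mathcal{A}$ on some instance of this family is $\Omega\!\left(16^{-\alpha}\frac{(k-m+1)T^{\frac{1}{\alpha+1}}}{k^{1+\frac{1}{\alpha+1}}}\sum_{i:\Delta_i>0}\Delta_i^{1-2\alpha}\right)$.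
   Context: Streaming stochastic multi-armed bandit: $n$ arms arrive one by one in a stream; arm $i$ has Bernoulli rewards with mean $\mu_i$. At most $m$ arms can be stored in memory; in each of $T$ rounds the player may discard stored arms and read next arms from the stream, then pulls exactly one stored arm $A_t$; discarded or passed-over arms cannot be pulled again. $\Delta_i=\mu_*-\mu_i$ where $\mu_*=\max_j\mu_j$, and $\mathbb{E}_\nu[R(T)]=\mathbb{E}_\nu[\sum_{t=1}^T(\mu_*-\mu_{A_t})]$ when the algorithm runs on instance $\nu$. Hard instances: let $\varepsilon=\frac14\left(\frac{k}{T}\right)^{\frac{1}{2+2\alpha}}$, arms arriving in the stream in order $1,2,\dots,n$. $\nu_1$ has arm 1 with mean $\frac12+n\varepsilon$, arms $2,\dots,k$ with mean $\frac12+(n-1)\varepsilon$, and arms $k+1,\dots,n$ with mean $\frac12$. For $2\le i\le k$, $\nu_i$ equals $\nu_1$ except that arm $i$ has mean $\frac12+(n+1)\varepsilon$. $\mathcal{I}=\{\nu_1,\dots,\nu_k\}$. For each $i\in[k]$, $\nu_i'$ equals $\nu_i$ except that arms $k+1,\dots,n$ have mean $1$; $\mathcal{I}'=\{\nu_1',\dots,\nu_k'\}$. *)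

theory Defs
  imports "HOL-Probability.Probability"
begin

text \<open>Arms are numbered 1..n and arrive in the stream in this order.
  A memory configuration is (M, p): M is the set of stored arms, p the index
  of the next arm to be read from the stream (initially ({}, 1)).\<close>

type_synonym config = "nat set \<times> nat"

text \<open>History: for each past round, the configuration after the discard/read
  phase, the pulled arm, and the observed (Bernoulli) reward.\<close>
type_synonym history = "(config \<times> nat \<times> bool) list"

text \<open>A (possibly randomized) algorithm: given the history, a distribution over
  (new configuration, arm to pull).\<close>
type_synonym policy = "history \<Rightarrow> (config \<times> nat) pmf"

inductive mem_step :: "nat \<Rightarrow> nat \<Rightarrow> config \<Rightarrow> config \<Rightarrow> bool" for n m where
  refl: "mem_step n m s s"
| discard: "mem_step n m s (M, p) \<Longrightarrow> x \<in> M \<Longrightarrow> mem_step n m s (M - {x}, p)"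
| read: "mem_step n m s (M, p) \<Longrightarrow> p \<le> n \<Longrightarrow> card M < m \<Longrightarrow> mem_step n m s (insert p M, Suc p)"

definition init_config :: config where "init_config = ({}, 1)"

definition cur_config :: "history \<Rightarrow> config" where
  "cur_config h = (if h = [] then init_config else fst (last h))"

definition legal_move :: "nat \<Rightarrow> nat \<Rightarrow> history \<Rightarrow> config \<Rightarrow> nat \<Rightarrow> bool" where
  "legal_move n m h c a \<longleftrightarrow> mem_step n m (cur_config h) c \<and> a \<in> fst c"

definition hist_ok :: "nat \<Rightarrow> nat \<Rightarrow> history \<Rightarrow> bool" where
  "hist_ok n m h \<longleftrightarrow> (\<forall>i<length h. legal_move n m (take i h) (fst (h ! i)) (fst (snd (h ! i))))"

text \<open>A single-pass streaming algorithm with memory m (on a stream of n arms).\<close>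
definition valid_policy :: "nat \<Rightarrow> nat \<Rightarrow> policy \<Rightarrow> bool" where
  "valid_policy n m \<pi> \<longleftrightarrow>
     (\<forall>h. hist_ok n m h \<longrightarrow> (\<forall>x \<in> set_pmf (\<pi> h). legal_move n m h (fst x) (snd x)))"

fun traj :: "policy \<Rightarrow> (nat \<Rightarrow> real) \<Rightarrow> nat \<Rightarrow> history pmf" where
  "traj \<pi> \<mu> 0 = return_pmf []"
| "traj \<pi> \<mu> (Suc t) =
     bind_pmf (traj \<pi> \<mu> t) (\<lambda>h. bind_pmf (\<pi> h) (\<lambda>(c, a).
       map_pmf (\<lambda>r. h @ [(c, a, r)]) (bernoulli_pmf (\<mu> a))))"

definition mu_star :: "nat \<Rightarrow> (nat \<Rightarrow> real) \<Rightarrow> real" where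
  "mu_star n \<mu> = Max (\<mu> ` {1..n})"

definition gap :: "nat \<Rightarrow> (nat \<Rightarrow> real) \<Rightarrow> nat \<Rightarrow> real" where
  "gap n \<mu> i = mu_star n \<mu> - \<mu> i"

definition regret_of :: "nat \<Rightarrow> (nat \<Rightarrow> real) \<Rightarrow> history \<Rightarrow> real" where
  "regret_of n \<mu> h = (\<Sum>x\<leftarrow>h. gap n \<mu> (fst (snd x)))"

definition expected_regret :: "nat \<Rightarrow> policy \<Rightarrow> (nat \<Rightarrow> real) \<Rightarrow> nat \<Rightarrow> real" where
  "expected_regret n \<pi> \<mu> T = measure_pmf.expectation (traj \<pi> \<mu> T) (regret_of n \<mu>)"

definition eps :: "real \<Rightarrow> nat \<Rightarrow> nat \<Rightarrow> real" where
  "eps \<alpha> k T = 1/4 * (real k / real T) powr (1 / (2 + 2 * \<alpha>))"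

definition nu :: "nat \<Rightarrow> nat \<Rightarrow> real \<Rightarrow> nat \<Rightarrow> nat \<Rightarrow> real" where
  "nu n k \<epsilon> i j =
     (if 2 \<le> i \<and> j = i then 1/2 + (real n + 1) * \<epsilon>
      else if j = 1 then 1/2 + real n * \<epsilon>
      else if j \<le> k then 1/2 + (real n - 1) * \<epsilon>
      else 1/2)"

definition nu' :: "nat \<Rightarrow> nat \<Rightarrow> real \<Rightarrow> nat \<Rightarrow> nat \<Rightarrow> real" where
  "nu' n k \<epsilon> i j = (if k < j then 1 else nu n k \<epsilon> i j)"

definition hard_instances :: "nat \<Rightarrow> nat \<Rightarrow> real \<Rightarrow> (nat \<Rightarrow> real) set" where
  "hard_instances n k \<epsilon> = (\<lambda>i. nu n k \<epsilon> i) ` {1..k} \<union> (\<lambda>i. nu' n k \<epsilon> i) ` {1..k}"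

end

theory Submission
  imports Defs
begin

text \<open>
  Fix the horizon \<open>T\<close> and let \<open>D\<close> be the expected length, under \<open>\<nu>\<^sub>1\<close>, of the prefix of the
  run before the first pull of an arm beyond \<open>k\<close>. The instance \<open>\<nu>'\<^sub>1\<close> agrees with \<open>\<nu>\<^sub>1\<close> on the
  arms \<open>\<le> k\<close>, so this prefix has the same law under \<open>\<nu>'\<^sub>1\<close>, where each of these arms has gap
  at least \<open>0.49\<close>: the regret on \<open>\<nu>'\<^sub>1\<close> is at least \<open>0.49 D\<close>.

  If \<open>D\<close> is small, the run usually pulls an arm beyond \<open>k\<close> within \<open>T/2\<close> rounds, and at that
  moment at most \<open>m - 1\<close> of the arms \<open>1..k\<close> are stored, so at least \<open>k - m + 1\<close> of them are lost
  for good. Passing from \<open>\<nu>\<^sub>1\<close> to \<open>\<nu>\<^sub>j\<close> only changes the rewards of arm \<open>j\<close>; on the event that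
  \<open>j\<close> is lost the likelihood ratio is \<open>exp (Z - \<kappa> N)\<close>, where \<open>N\<close> counts the pulls of \<open>j\<close> in the
  prefix, \<open>\<kappa> = O(\<epsilon>\<^sup>2)\<close> is a Kullback-Leibler divergence and \<open>Z\<close> is a martingale with
  \<open>E Z\<^sup>2 = O(\<epsilon>\<^sup>2) E N\<close>. From \<open>exp (Z - \<kappa> N) \<ge> 1/2 - Z\<^sup>2/2 - \<kappa> N\<close> and \<open>\<Sum>\<^sub>j N \<le> D\<close>, some \<open>\<nu>\<^sub>j\<close> loses its
  best arm \<open>j\<close> with probability above \<open>(k - m + 1)/(4k)\<close>, and then pays \<open>\<epsilon>\<close> in each of the last
  \<open>T/2\<close> rounds. For the given \<open>\<epsilon>\<close> one of the two alternatives exceeds the claimed bound.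
\<close>

section \<open>Histories of a memory-bounded streaming policy\<close>

definition config_ok :: "nat \<Rightarrow> nat \<Rightarrow> config \<Rightarrow> bool" where
  "config_ok n m c \<longleftrightarrow>
     finite (fst c) \<and> card (fst c) \<le> m \<and> fst c \<subseteq> {1..<snd c} \<and> 1 \<le> snd c \<and> snd c \<le> Suc n"

lemma config_ok_init: "config_ok n m init_config"
  by (simp add: config_ok_def init_config_def)

lemma config_ok_mem_step: "mem_step n m s s' \<Longrightarrow> config_ok n m s \<Longrightarrow> config_ok n m s'"
proof (induction rule: mem_step.induct)
  case refl then show ?case .
next
  case (discard s M p x) then show ?case
    by (auto simp: config_ok_def intro: order.trans[OF card_Diff1_le])
next
  case (read s M p) then show ?case by (auto simp: config_ok_def card_insert_if)
qed

lemma mem_step_lost: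
  "mem_step n m s s' \<Longrightarrow> j \<notin> fst s \<Longrightarrow> j < snd s \<Longrightarrow> j \<notin> fst s' \<and> j < snd s'"
  by (induction rule: mem_step.induct) auto

abbreviation arm :: "config \<times> nat \<times> bool \<Rightarrow> nat" where "arm x \<equiv> fst (snd x)"
abbreviation reward :: "config \<times> nat \<times> bool \<Rightarrow> bool" where "reward x \<equiv> snd (snd x)"

lemma cur_config_take:
  assumes "0 < s" "s \<le> length h"
  shows "cur_config (take s h) = fst (h ! (s - 1))"
proof -
  have "take s h \<noteq> []" using assms by auto
  moreover have "last (take s h) = h ! (s - 1)"
    using assms by (subst last_conv_nth) (auto simp: min_def)
  ultimately show ?thesis by (simp add: cur_config_def)
qed

lemma hist_ok_nth:
  assumes "hist_ok n m h" "s < length h"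
  shows "mem_step n m (if s = 0 then init_config else fst (h ! (s - 1))) (fst (h ! s))"
    and "arm (h ! s) \<in> fst (fst (h ! s))"
proof -
  have "legal_move n m (take s h) (fst (h ! s)) (arm (h ! s))"
    using assms by (auto simp: hist_ok_def)
  moreover have "cur_config (take s h) = (if s = 0 then init_config else fst (h ! (s - 1)))"
    using cur_config_take[of s h] assms by (auto simp: cur_config_def)
  ultimately show "mem_step n m (if s = 0 then init_config else fst (h ! (s - 1))) (fst (h ! s))"
    and "arm (h ! s) \<in> fst (fst (h ! s))"
    by (simp_all add: legal_move_def)
qed

lemma hist_ok_config_ok: "hist_ok n m h \<Longrightarrow> s < length h \<Longrightarrow> config_ok n m (fst (h ! s))"
proof (induction s)
  case 0 then show ?case
    using hist_ok_nth(1)[OF 0(1), of 0] config_ok_init config_ok_mem_step by fastforce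
next
  case (Suc s) then show ?case
    using hist_ok_nth(1)[OF Suc(2), of "Suc s"] config_ok_mem_step[of n m "fst (h ! s)"] by auto
qed

lemma hist_ok_cur_config_ok: "hist_ok n m h \<Longrightarrow> config_ok n m (cur_config h)"
  using hist_ok_config_ok[of n m h "length h - 1"] config_ok_init
  by (cases "h = []") (auto simp: cur_config_def last_conv_nth)

lemma hist_ok_lost:
  assumes ok: "hist_ok n m h" and "s \<le> s'" "s' < length h"
    and "j \<notin> fst (fst (h ! s))" "j < snd (fst (h ! s))"
  shows "j \<notin> fst (fst (h ! s')) \<and> j < snd (fst (h ! s'))"
  using assms(2,3)
proof (induction s' rule: dec_induct)
  case base then show ?case using assms by auto
next
  case (step s') then show ?case
    using hist_ok_nth(1)[OF ok, of "Suc s'"] mem_step_lost[of n m "fst (h ! s')" "fst (h ! Suc s')" j]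
    by auto
qed

lemma hist_ok_lost_not_pulled:
  assumes "hist_ok n m h" "s \<le> s'" "s' < length h" "j \<notin> fst (fst (h ! s))" "j < snd (fst (h ! s))"
  shows "arm (h ! s') \<noteq> j"
  using hist_ok_lost[OF assms] hist_ok_nth(2)[OF assms(1,3)] by auto

lemma config_ok_move_bounded:
  "config_ok n m c \<Longrightarrow> a \<in> fst c \<Longrightarrow> (c, a) \<in> (Pow {1..n} \<times> {0..Suc n}) \<times> {1..n}"
  by (cases c) (auto simp: config_ok_def)

lemma set_pmf_traj:
  assumes vp: "valid_policy n m \<pi>" and "h \<in> set_pmf (traj \<pi> \<mu> t)"
  shows "length h = t \<and> hist_ok n m h"
  using assms(2)
proof (induction t arbitrary: h)
  case 0 then show ?case by (simp add: hist_ok_def)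
next
  case (Suc t)
  then obtain h0 c a r where h: "h = h0 @ [(c, a, r)]" and h0: "h0 \<in> set_pmf (traj \<pi> \<mu> t)"
    and ca: "(c, a) \<in> set_pmf (\<pi> h0)"
    by (auto split: prod.splits)
  from Suc.IH[OF h0] have len: "length h0 = t" and ok: "hist_ok n m h0" by auto
  have "legal_move n m h0 c a" using vp ok ca unfolding valid_policy_def by fastforce
  then have "hist_ok n m h"
    using ok by (auto simp: h hist_ok_def nth_append less_Suc_eq)
  then show ?case using h len by simp
qed

lemma finite_set_pmf_traj:
  assumes vp: "valid_policy n m \<pi>"
  shows "finite (set_pmf (traj \<pi> \<mu> t))"
proof -
  let ?X = "(Pow {1..n} \<times> {0..Suc n}) \<times> {1..n} \<times> (UNIV :: bool set)"
  have "set h \<subseteq> ?X" if "hist_ok n m h" for h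
  proof
    fix x assume "x \<in> set h"
    then obtain s where s: "s < length h" "x = h ! s" by (auto simp: in_set_conv_nth)
    then show "x \<in> ?X"
      using config_ok_move_bounded[OF hist_ok_config_ok[OF that s(1)] hist_ok_nth(2)[OF that s(1)]]
      by (auto simp: mem_Times_iff)
  qed
  then have "set_pmf (traj \<pi> \<mu> t) \<subseteq> {h. set h \<subseteq> ?X \<and> length h = t}"
    using set_pmf_traj[OF vp] by blast
  moreover have "finite {h. set h \<subseteq> ?X \<and> length h = t}"
    by (rule finite_lists_length_eq) simp
  ultimately show ?thesis by (rule finite_subset)
qed

lemma finite_set_pmf_policy:
  assumes "valid_policy n m \<pi>" "hist_ok n m h"
  shows "finite (set_pmf (\<pi> h))"
proof (rule finite_subset)
  show "set_pmf (\<pi> h) \<subseteq> (Pow {1..n} \<times> {0..Suc n}) \<times> {1..n}"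
  proof
    fix x assume x: "x \<in> set_pmf (\<pi> h)"
    obtain c a where ca: "x = (c, a)" by fastforce
    have "legal_move n m h c a" using assms x unfolding ca valid_policy_def by fastforce
    then show "x \<in> (Pow {1..n} \<times> {0..Suc n}) \<times> {1..n}"
      using config_ok_move_bounded[OF config_ok_mem_step[OF _ hist_ok_cur_config_ok[OF assms(2)]]]
      unfolding ca legal_move_def by blast
  qed
qed simp

lemma integrable_traj:
  "valid_policy n m \<pi> \<Longrightarrow> integrable (measure_pmf (traj \<pi> \<mu> t)) (f :: history \<Rightarrow> real)"
  by (rule integrable_measure_pmf_finite[OF finite_set_pmf_traj])

section \<open>Expectations over runs\<close>

lemma expectation_bind_pmf_finite:
  fixes g :: "'b \<Rightarrow> real"
  assumes "finite (set_pmf p)" "\<And>x. x \<in> set_pmf p \<Longrightarrow> finite (set_pmf (f x))"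
  shows "measure_pmf.expectation (bind_pmf p f) g =
           measure_pmf.expectation p (\<lambda>x. measure_pmf.expectation (f x) g)"
  using assms
  by (subst pmf_expectation_bind[of "set_pmf p"]) (auto simp: integral_measure_pmf[of "set_pmf p"])

lemma expectation_traj_Suc:
  fixes f :: "history \<Rightarrow> real"
  assumes vp: "valid_policy n m \<pi>" and \<mu>: "\<And>a. 0 \<le> \<mu> a \<and> \<mu> a \<le> 1"
  shows "measure_pmf.expectation (traj \<pi> \<mu> (Suc t)) f =
    measure_pmf.expectation (traj \<pi> \<mu> t) (\<lambda>h. measure_pmf.expectation (\<pi> h)
      (\<lambda>(c, a). \<mu> a * f (h @ [(c, a, True)]) + (1 - \<mu> a) * f (h @ [(c, a, False)])))"
proof -
  let ?step = "\<lambda>h (c, a). map_pmf (\<lambda>r. h @ [(c, a, r)]) (bernoulli_pmf (\<mu> a))"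
  have "measure_pmf.expectation (bind_pmf (\<pi> h) (?step h)) f =
          measure_pmf.expectation (\<pi> h)
            (\<lambda>(c, a). \<mu> a * f (h @ [(c, a, True)]) + (1 - \<mu> a) * f (h @ [(c, a, False)]))"
    if "h \<in> set_pmf (traj \<pi> \<mu> t)" for h
  proof -
    have "finite (set_pmf (\<pi> h))"
      using finite_set_pmf_policy[OF vp] set_pmf_traj[OF vp that] by blast
    then show ?thesis
      using \<mu> by (subst expectation_bind_pmf_finite) (auto intro!: integral_cong simp: case_prod_unfold algebra_simps)
  qed
  moreover have "finite (set_pmf (bind_pmf (\<pi> h) (?step h)))" if "h \<in> set_pmf (traj \<pi> \<mu> t)" for h
    using finite_set_pmf_policy[OF vp] set_pmf_traj[OF vp that] by (auto split: prod.splits)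
  ultimately show ?thesis
    by (simp only: traj.simps, subst expectation_bind_pmf_finite[OF finite_set_pmf_traj[OF vp]])
      (auto intro!: integral_cong_AE simp: AE_measure_pmf_iff)
qed

lemma expectation_traj_invariant:
  fixes f :: "history \<Rightarrow> real"
  assumes vp: "valid_policy n m \<pi>" and \<mu>: "\<And>a. 0 \<le> \<mu> a \<and> \<mu> a \<le> 1"
    and step: "\<And>h c a. \<mu> a * f (h @ [(c, a, True)]) + (1 - \<mu> a) * f (h @ [(c, a, False)]) = f h"
  shows "measure_pmf.expectation (traj \<pi> \<mu> t) f = f []"
proof (induction t)
  case (Suc t) then show ?case
    by (simp only: expectation_traj_Suc[OF vp \<mu>]) (simp add: step case_prod_beta')
qed simp

definition step_likelihood_ratio ::
    "(nat \<Rightarrow> real) \<Rightarrow> (nat \<Rightarrow> real) \<Rightarrow> config \<times> nat \<times> bool \<Rightarrow> real" where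
  "step_likelihood_ratio \<mu> \<mu>' x =
     (if reward x then \<mu>' (arm x) / \<mu> (arm x) else (1 - \<mu>' (arm x)) / (1 - \<mu> (arm x)))"

definition likelihood_ratio :: "(nat \<Rightarrow> real) \<Rightarrow> (nat \<Rightarrow> real) \<Rightarrow> history \<Rightarrow> real" where
  "likelihood_ratio \<mu> \<mu>' h = (\<Prod>x\<leftarrow>h. step_likelihood_ratio \<mu> \<mu>' x)"

lemma prod_list_exp:
  fixes g :: "'a \<Rightarrow> real"
  assumes "\<And>x. w x = exp (g x)"
  shows "prod_list (map w xs) = exp (sum_list (map g xs))"
  using assms by (induction xs) (auto simp: exp_add)

lemma expectation_traj_change_measure:
  fixes f :: "history \<Rightarrow> real"
  assumes vp: "valid_policy n m \<pi>"
    and \<mu>: "\<And>a. 0 < \<mu> a \<and> \<mu> a < 1" and \<mu>': "\<And>a. 0 \<le> \<mu>' a \<and> \<mu>' a \<le> 1"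
  shows "measure_pmf.expectation (traj \<pi> \<mu>' t) f =
           measure_pmf.expectation (traj \<pi> \<mu> t) (\<lambda>h. f h * likelihood_ratio \<mu> \<mu>' h)"
proof (induction t arbitrary: f)
  case 0 then show ?case by (simp add: likelihood_ratio_def)
next
  case (Suc t)
  let ?L = "likelihood_ratio \<mu> \<mu>'"
  have \<mu>01: "0 \<le> \<mu> a \<and> \<mu> a \<le> 1" for a using \<mu>[of a] by simp
  have reweight: "(\<mu>' a * f (h @ [(c, a, True)]) + (1 - \<mu>' a) * f (h @ [(c, a, False)])) * ?L h =
      \<mu> a * (f (h @ [(c, a, True)]) * ?L (h @ [(c, a, True)])) +
      (1 - \<mu> a) * (f (h @ [(c, a, False)]) * ?L (h @ [(c, a, False)]))" for h c a
    using \<mu>[of a] by (simp add: likelihood_ratio_def step_likelihood_ratio_def field_simps)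
  show ?case
    by (simp only: expectation_traj_Suc[OF vp \<mu>'] expectation_traj_Suc[OF vp \<mu>01] Suc.IH)
      (simp add: reweight case_prod_beta' flip: integral_mult_left_zero)
qed

section \<open>The prefix of low arms\<close>

definition low_prefix :: "nat \<Rightarrow> history \<Rightarrow> history" where
  "low_prefix k h = takeWhile (\<lambda>x. arm x \<le> k) h"

lemma low_prefix_snoc:
  "low_prefix k (h @ [x]) =
     (if (\<forall>y\<in>set h. arm y \<le> k) \<and> arm x \<le> k then low_prefix k h @ [x] else low_prefix k h)"
proof (cases "\<forall>y\<in>set h. arm y \<le> k")
  case True
  then have "low_prefix k h = h" by (simp add: low_prefix_def)
  then show ?thesis using True by (simp add: low_prefix_def[of k "h @ [x]"] takeWhile_append)
qed (auto simp: low_prefix_def takeWhile_append)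

lemma sum_length_filter_le:
  assumes "finite S"
  shows "(\<Sum>j\<in>S. length (filter (\<lambda>x. f x = j) xs)) \<le> length xs"
proof (induction xs)
  case (Cons x xs)
  have "(\<Sum>j\<in>S. length (filter (\<lambda>y. f y = j) (x # xs))) =
        (\<Sum>j\<in>S. length (filter (\<lambda>y. f y = j) xs)) + (\<Sum>j\<in>S. if f x = j then 1 else 0)"
    by (auto simp: sum.distrib[symmetric] intro!: sum.cong)
  also have "(\<Sum>j\<in>S. if f x = j then 1 else 0) \<le> (1 :: nat)"
    using assms by (simp add: sum.delta)
  finally show ?case using Cons by simp
qed simp

definition prefix_score :: "(nat \<Rightarrow> bool \<Rightarrow> real) \<Rightarrow> nat \<Rightarrow> history \<Rightarrow> real" where
  "prefix_score \<phi> k h = (\<Sum>x\<leftarrow>low_prefix k h. \<phi> (arm x) (reward x))"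

definition prefix_variance :: "(nat \<Rightarrow> real) \<Rightarrow> nat \<Rightarrow> history \<Rightarrow> real" where
  "prefix_variance V k h = (\<Sum>x\<leftarrow>low_prefix k h. V (arm x))"

text \<open>\<open>prefix_score\<^sup>2 - prefix_variance\<close> is a martingale.\<close>
lemma expectation_prefix_score_sq:
  assumes vp: "valid_policy n m \<pi>" and \<mu>: "\<And>a. 0 \<le> \<mu> a \<and> \<mu> a \<le> 1"
    and centred: "\<And>a. \<mu> a * \<phi> a True + (1 - \<mu> a) * \<phi> a False = 0"
    and V: "\<And>a. V a = \<mu> a * (\<phi> a True)\<^sup>2 + (1 - \<mu> a) * (\<phi> a False)\<^sup>2"
  shows "measure_pmf.expectation (traj \<pi> \<mu> t) (\<lambda>h. (prefix_score \<phi> k h)\<^sup>2) =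
           measure_pmf.expectation (traj \<pi> \<mu> t) (prefix_variance V k)"
proof -
  let ?Z = "prefix_score \<phi> k" and ?W = "prefix_variance V k"
  have "measure_pmf.expectation (traj \<pi> \<mu> t) (\<lambda>h. (?Z h)\<^sup>2 - ?W h) = (?Z [])\<^sup>2 - ?W []"
  proof (rule expectation_traj_invariant[OF vp \<mu>])
    fix h c a
    show "\<mu> a * ((?Z (h @ [(c, a, True)]))\<^sup>2 - ?W (h @ [(c, a, True)])) +
          (1 - \<mu> a) * ((?Z (h @ [(c, a, False)]))\<^sup>2 - ?W (h @ [(c, a, False)])) = (?Z h)\<^sup>2 - ?W h"
    proof (cases "(\<forall>y\<in>set h. arm y \<le> k) \<and> a \<le> k")
      case True
      then have "?Z (h @ [(c, a, r)]) = ?Z h + \<phi> a r" "?W (h @ [(c, a, r)]) = ?W h + V a" for r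
        by (simp_all add: prefix_score_def prefix_variance_def low_prefix_snoc)
      moreover have "\<mu> a * ((?Z h + \<phi> a True)\<^sup>2 - (?W h + V a)) +
            (1 - \<mu> a) * ((?Z h + \<phi> a False)\<^sup>2 - (?W h + V a)) =
          (?Z h)\<^sup>2 - ?W h + 2 * ?Z h * (\<mu> a * \<phi> a True + (1 - \<mu> a) * \<phi> a False)"
        by (simp add: V power2_eq_square algebra_simps)
      ultimately show ?thesis by (simp add: centred)
    next
      case False
      then have "?Z (h @ [(c, a, r)]) = ?Z h" "?W (h @ [(c, a, r)]) = ?W h" for r
        by (auto simp: prefix_score_def prefix_variance_def low_prefix_snoc)
      then show ?thesis by (simp add: algebra_simps)
    qed
  qed
  moreover have "?Z [] = 0" "?W [] = 0" by (simp_all add: prefix_score_def prefix_variance_def low_prefix_def)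
  ultimately show ?thesis
    by (simp add: Bochner_Integration.integral_diff[OF integrable_traj[OF vp] integrable_traj[OF vp]])
qed

definition low_state :: "nat \<Rightarrow> history \<Rightarrow> history \<times> bool" where
  "low_state k h = (low_prefix k h, \<forall>y\<in>set h. arm y \<le> k)"

lemma low_state_snoc:
  "low_state k (h @ [x]) =
     (if snd (low_state k h) then
        (if arm x \<le> k then (fst (low_state k h) @ [x], True) else (fst (low_state k h), False))
      else low_state k h)"
  by (simp add: low_state_def low_prefix_snoc)

definition traj_step :: "policy \<Rightarrow> (nat \<Rightarrow> real) \<Rightarrow> history \<Rightarrow> history pmf" where
  "traj_step \<pi> \<mu> h = bind_pmf (\<pi> h) (\<lambda>(c, a). map_pmf (\<lambda>r. h @ [(c, a, r)]) (bernoulli_pmf (\<mu> a)))"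

lemma traj_Suc_step: "traj \<pi> \<mu> (Suc t) = bind_pmf (traj \<pi> \<mu> t) (traj_step \<pi> \<mu>)"
  by (simp add: traj_step_def[abs_def])

lemma map_pmf_low_state_traj_step:
  "map_pmf (low_state k) (traj_step \<pi> \<mu> h) =
     (if snd (low_state k h) then map_pmf (low_state k) (traj_step \<pi> \<mu> (fst (low_state k h)))
      else return_pmf (low_state k h))"
proof (cases "snd (low_state k h)")
  case True
  then have "fst (low_state k h) = h" by (simp add: low_state_def low_prefix_def)
  then show ?thesis using True by simp
next
  case False
  then have "map_pmf (low_state k) (traj_step \<pi> \<mu> h) = map_pmf (\<lambda>_. low_state k h) (traj_step \<pi> \<mu> h)"
    by (intro pmf.map_cong) (auto simp: traj_step_def low_state_snoc split: prod.splits)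
  then show ?thesis using False by (simp add: map_pmf_const)
qed

text \<open>The reward of an arm beyond \<open>k\<close> never enters the low state.\<close>
lemma map_pmf_low_state_traj_step_cong:
  assumes agree: "\<And>a. a \<le> k \<Longrightarrow> \<mu> a = \<mu>' a"
  shows "map_pmf (low_state k) (traj_step \<pi> \<mu> h) = map_pmf (low_state k) (traj_step \<pi> \<mu>' h)"
  unfolding traj_step_def map_bind_pmf
proof (intro bind_pmf_cong refl)
  fix ca :: "config \<times> nat"
  obtain c a where ca: "ca = (c, a)" by fastforce
  have "map_pmf (low_state k) (map_pmf (\<lambda>r. h @ [(c, a, r)]) (bernoulli_pmf (\<mu> a))) =
        map_pmf (low_state k) (map_pmf (\<lambda>r. h @ [(c, a, r)]) (bernoulli_pmf (\<mu>' a)))"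
  proof (cases "a \<le> k")
    case True then show ?thesis using agree by simp
  next
    case False
    then have "(\<lambda>r. low_state k (h @ [(c, a, r)])) = (\<lambda>_. low_state k (h @ [(c, a, True)]))"
      by (simp add: low_state_snoc)
    then show ?thesis by (simp add: pmf.map_comp o_def map_pmf_const)
  qed
  then show "map_pmf (low_state k) (case ca of (c, a) \<Rightarrow> map_pmf (\<lambda>r. h @ [(c, a, r)]) (bernoulli_pmf (\<mu> a))) =
        map_pmf (low_state k) (case ca of (c, a) \<Rightarrow> map_pmf (\<lambda>r. h @ [(c, a, r)]) (bernoulli_pmf (\<mu>' a)))"
    by (simp add: ca)
qed simp

lemma map_pmf_low_state_traj:
  assumes agree: "\<And>a. a \<le> k \<Longrightarrow> \<mu> a = \<mu>' a"
  shows "map_pmf (low_state k) (traj \<pi> \<mu> t) = map_pmf (low_state k) (traj \<pi> \<mu>' t)"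
proof (induction t)
  case (Suc t)
  define G where
    "G \<nu> s = (if snd s then map_pmf (low_state k) (traj_step \<pi> \<nu> (fst s)) else return_pmf s)" for \<nu> s
  have "map_pmf (low_state k) (traj_step \<pi> \<nu> h) = G \<nu> (low_state k h)" for \<nu> h
    unfolding G_def by (rule map_pmf_low_state_traj_step)
  then have "map_pmf (low_state k) (traj \<pi> \<nu> (Suc t)) = bind_pmf (map_pmf (low_state k) (traj \<pi> \<nu> t)) (G \<nu>)"
    for \<nu>
    by (simp only: traj_Suc_step map_bind_pmf bind_map_pmf)
  moreover have "G \<mu> = G \<mu>'"
    using map_pmf_low_state_traj_step_cong[OF agree] by (auto simp: G_def)
  ultimately show ?case using Suc.IH by simp
qed simp

section \<open>Log-likelihood ratios of Bernoulli distributions\<close>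

definition bernoulli_llr :: "real \<Rightarrow> real \<Rightarrow> bool \<Rightarrow> real" where
  "bernoulli_llr p q r = (if r then ln (q / p) else ln ((1 - q) / (1 - p)))"

definition bernoulli_kl :: "real \<Rightarrow> real \<Rightarrow> real" where
  "bernoulli_kl p q = - (p * bernoulli_llr p q True + (1 - p) * bernoulli_llr p q False)"

lemma bernoulli_kl_eq:
  assumes "0 < p" "p < 1" "0 < q" "q < 1"
  shows "bernoulli_kl p q = p * ln (p / q) + (1 - p) * ln ((1 - p) / (1 - q))"
  using assms by (simp add: bernoulli_kl_def bernoulli_llr_def ln_div algebra_simps)

lemma bernoulli_kl_nonneg:
  assumes "0 < p" "p < 1" "0 < q" "q < 1"
  shows "0 \<le> bernoulli_kl p q"
proof -
  have "p * (1 - q / p) + (1 - p) * (1 - (1 - q) / (1 - p)) \<le> bernoulli_kl p q"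
    unfolding bernoulli_kl_eq[OF assms]
    using assms ln_le_minus_one[of "q / p"] ln_le_minus_one[of "(1 - q) / (1 - p)"]
    by (intro add_mono mult_left_mono) (auto simp: ln_div)
  moreover have "p * (1 - q / p) + (1 - p) * (1 - (1 - q) / (1 - p)) = 0"
    using assms by (simp add: field_simps)
  ultimately show ?thesis by simp
qed

lemma bernoulli_kl_le_chi_square:
  assumes "0 < p" "p < 1" "0 < q" "q < 1"
  shows "bernoulli_kl p q \<le> (q - p)\<^sup>2 / (q * (1 - q))"
proof -
  have "bernoulli_kl p q \<le> p * (p / q - 1) + (1 - p) * ((1 - p) / (1 - q) - 1)"
    unfolding bernoulli_kl_eq[OF assms]
    using assms ln_le_minus_one[of "p / q"] ln_le_minus_one[of "(1 - p) / (1 - q)"]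
    by (intro add_mono mult_left_mono) auto
  also have "\<dots> = (q - p)\<^sup>2 / (q * (1 - q))"
    using assms by (simp add: field_simps power2_eq_square)
  finally show ?thesis .
qed

lemma bernoulli_llr_variance:
  "p * (bernoulli_llr p q True + bernoulli_kl p q)\<^sup>2 + (1 - p) * (bernoulli_llr p q False + bernoulli_kl p q)\<^sup>2
     = p * (1 - p) * (bernoulli_llr p q True - bernoulli_llr p q False)\<^sup>2"
  by (simp add: bernoulli_kl_def power2_eq_square algebra_simps)

lemma bernoulli_llr_spread:
  assumes "0 < p" "p \<le> q" "q < 1"
  shows "0 \<le> bernoulli_llr p q True - bernoulli_llr p q False"
    and "bernoulli_llr p q True - bernoulli_llr p q False \<le> (q - p) / (p * (1 - q))"
proof -
  have spread: "bernoulli_llr p q True - bernoulli_llr p q False = ln (q * (1 - p) / (p * (1 - q)))"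
    using assms by (simp add: bernoulli_llr_def ln_div ln_mult)
  have ge1: "1 \<le> q * (1 - p) / (p * (1 - q))"
    using assms by (simp add: field_simps mult_mono)
  then show "0 \<le> bernoulli_llr p q True - bernoulli_llr p q False" by (simp add: spread)
  have "q * (1 - p) / (p * (1 - q)) - 1 = (q - p) / (p * (1 - q))"
    using assms by (simp add: field_simps)
  then show "bernoulli_llr p q True - bernoulli_llr p q False \<le> (q - p) / (p * (1 - q))"
    using ln_le_minus_one[of "q * (1 - p) / (p * (1 - q))"] ge1 by (simp add: spread)
qed

lemma exp_diff_ge_quadratic:
  fixes z y :: real
  shows "1/2 - z\<^sup>2 / 2 - y \<le> exp (z - y)"
proof -
  have "1/2 - z\<^sup>2 / 2 \<le> 1 + z"
    using zero_le_power2[of "z + 1"] by (simp add: power2_eq_square algebra_simps)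
  then show ?thesis using exp_ge_add_one_self[of "z - y"] by linarith
qed

section \<open>The hard instances\<close>

lemma nu_eq_nu_1: "2 \<le> j \<Longrightarrow> a \<noteq> j \<Longrightarrow> nu n k \<epsilon> j a = nu n k \<epsilon> 1 a"
  by (simp add: nu_def)

lemma mult_powr_le_powr:
  fixes x \<epsilon> \<alpha> :: real
  assumes "1 \<le> \<alpha>" "1 \<le> x" "0 < \<epsilon>"
  shows "x * (x * \<epsilon>) powr (1 - 2 * \<alpha>) \<le> \<epsilon> powr (1 - 2 * \<alpha>)"
proof -
  have "x * (x * \<epsilon>) powr (1 - 2 * \<alpha>) = x powr (2 - 2 * \<alpha>) * \<epsilon> powr (1 - 2 * \<alpha>)"
    using assms by (simp add: powr_mult powr_mult_base algebra_simps)
  also have "\<dots> \<le> 1 * \<epsilon> powr (1 - 2 * \<alpha>)"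
    using assms powr_mono[of "2 - 2 * \<alpha>" 0 x] by (intro mult_right_mono) auto
  finally show ?thesis by simp
qed

locale hard_family =
  fixes n k :: nat and \<epsilon> :: real
  assumes k2: "2 \<le> k" and kn: "k < n"
    and eps_pos: "0 < \<epsilon>" and eps_small: "(real n + 1) * \<epsilon> \<le> 1/100"
begin

lemma n_ge_1: "1 \<le> n" using k2 kn by simp

lemma nu_bounds: "1/2 \<le> nu n k \<epsilon> j a \<and> nu n k \<epsilon> j a \<le> 1/2 + (real n + 1) * \<epsilon>"
  using eps_pos n_ge_1 by (auto simp: nu_def algebra_simps)

lemma nu_01: "0 < nu n k \<epsilon> j a \<and> nu n k \<epsilon> j a < 1"
  using nu_bounds[of j a] eps_small by auto

lemma nu'_01: "0 \<le> nu' n k \<epsilon> j a \<and> nu' n k \<epsilon> j a \<le> 1"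
  using nu_01[of j a] by (auto simp: nu'_def)

lemma mu_star_nu_1 [simp]: "mu_star n (nu n k \<epsilon> (Suc 0)) = 1/2 + real n * \<epsilon>"
  unfolding mu_star_def
proof (rule Max_eqI)
  show "y \<le> 1/2 + real n * \<epsilon>" if "y \<in> nu n k \<epsilon> (Suc 0) ` {1..n}" for y
    using that eps_pos by (auto simp: nu_def algebra_simps)
  show "1/2 + real n * \<epsilon> \<in> nu n k \<epsilon> (Suc 0) ` {1..n}"
    using n_ge_1 by (auto simp: nu_def image_iff intro!: bexI[of _ 1])
qed simp

lemma mu_star_nu:
  assumes "2 \<le> j" "j \<le> k"
  shows "mu_star n (nu n k \<epsilon> j) = 1/2 + (real n + 1) * \<epsilon>"
  unfolding mu_star_def
proof (rule Max_eqI)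
  show "y \<le> 1/2 + (real n + 1) * \<epsilon>" if "y \<in> nu n k \<epsilon> j ` {1..n}" for y
    using that nu_bounds by auto
  show "1/2 + (real n + 1) * \<epsilon> \<in> nu n k \<epsilon> j ` {1..n}"
    using assms kn by (auto simp: nu_def image_iff intro!: bexI[of _ j])
qed simp

lemma mu_star_nu': "mu_star n (nu' n k \<epsilon> j) = 1"
  unfolding mu_star_def
proof (rule Max_eqI)
  show "y \<le> 1" if "y \<in> nu' n k \<epsilon> j ` {1..n}" for y
    using that nu'_01 by auto
  show "1 \<in> nu' n k \<epsilon> j ` {1..n}"
    using kn n_ge_1 by (intro image_eqI[of _ _ n]) (auto simp: nu'_def)
qed simp

lemma gap_nu_self: "j \<in> {1..k} \<Longrightarrow> gap n (nu n k \<epsilon> j) j = 0"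
  by (cases "j = 1") (auto simp: gap_def mu_star_nu nu_def algebra_simps)

lemma gap_nu_nonneg: "j \<in> {1..k} \<Longrightarrow> 0 \<le> gap n (nu n k \<epsilon> j) a"
  using eps_pos by (cases "j = 1") (auto simp: gap_def mu_star_nu nu_def algebra_simps)

lemma gap_nu_ge_eps: "j \<in> {1..k} \<Longrightarrow> a \<noteq> j \<Longrightarrow> \<epsilon> \<le> gap n (nu n k \<epsilon> j) a"
  using eps_pos n_ge_1 by (cases "j = 1") (auto simp: gap_def mu_star_nu nu_def algebra_simps)

lemma gap_nu_high: "j \<in> {1..k} \<Longrightarrow> k < a \<Longrightarrow> real n * \<epsilon> \<le> gap n (nu n k \<epsilon> j) a"
  using eps_pos by (cases "j = 1") (auto simp: gap_def mu_star_nu nu_def algebra_simps)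

lemma gap_nu'_nonneg: "0 \<le> gap n (nu' n k \<epsilon> j) a"
  using nu'_01 by (simp add: gap_def mu_star_nu')

lemma gap_nu'_low: "a \<le> k \<Longrightarrow> 49/100 \<le> gap n (nu' n k \<epsilon> j) a"
  using nu_bounds[of j a] eps_small by (simp add: gap_def mu_star_nu' nu'_def)

lemma gap_nu'_high: "k < a \<Longrightarrow> gap n (nu' n k \<epsilon> j) a = 0"
  by (simp add: gap_def mu_star_nu' nu'_def)

lemma sum_gap_powr_nu_le:
  assumes "1 \<le> \<alpha>" "j \<in> {1..k}"
  shows "(\<Sum>i \<in> {i \<in> {1..n}. gap n (nu n k \<epsilon> j) i > 0}. gap n (nu n k \<epsilon> j) i powr (1 - 2 * \<alpha>))
           \<le> real k * \<epsilon> powr (1 - 2 * \<alpha>)"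
proof -
  let ?g = "gap n (nu n k \<epsilon> j)" and ?e = "1 - 2 * \<alpha>"
  let ?S = "{i \<in> {1..n}. ?g i > 0}"
  have e: "?e \<le> 0" using assms by simp
  have "(\<Sum>i\<in>?S. ?g i powr ?e) = (\<Sum>i\<in>?S \<inter> {1..k}. ?g i powr ?e) + (\<Sum>i\<in>?S - {1..k}. ?g i powr ?e)"
    by (rule sum.Int_Diff) simp
  also have "(\<Sum>i\<in>?S \<inter> {1..k}. ?g i powr ?e) \<le> (\<Sum>i\<in>{1..k} - {j}. \<epsilon> powr ?e)"
  proof -
    have "(\<Sum>i\<in>?S \<inter> {1..k}. ?g i powr ?e) \<le> (\<Sum>i\<in>?S \<inter> {1..k}. \<epsilon> powr ?e)"
      using assms gap_nu_self gap_nu_ge_eps eps_pos e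
      by (intro sum_mono powr_mono2') (auto, metis less_irrefl)
    also have "\<dots> \<le> (\<Sum>i\<in>{1..k} - {j}. \<epsilon> powr ?e)"
      using gap_nu_self[OF assms(2)] by (intro sum_mono2) auto
    finally show ?thesis .
  qed
  also have "(\<Sum>i\<in>?S - {1..k}. ?g i powr ?e) \<le> (\<Sum>i\<in>{k+1..n}. (real n * \<epsilon>) powr ?e)"
  proof -
    have "(\<Sum>i\<in>?S - {1..k}. ?g i powr ?e) \<le> (\<Sum>i\<in>?S - {1..k}. (real n * \<epsilon>) powr ?e)"
      using assms gap_nu_high eps_pos n_ge_1 e by (intro sum_mono powr_mono2') auto
    also have "\<dots> \<le> (\<Sum>i\<in>{k+1..n}. (real n * \<epsilon>) powr ?e)"
      by (intro sum_mono2) auto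
    finally show ?thesis .
  qed
  also have "(\<Sum>i\<in>{k+1..n}. (real n * \<epsilon>) powr ?e) \<le> real n * (real n * \<epsilon>) powr ?e"
    by (simp add: mult_right_mono)
  also have "\<dots> \<le> \<epsilon> powr ?e"
    using mult_powr_le_powr[OF assms(1) _ eps_pos] n_ge_1 by simp
  finally show ?thesis
    using assms k2 by (simp add: algebra_simps of_nat_diff)
qed

lemma sum_gap_powr_nu'_le:
  assumes "1 \<le> \<alpha>"
  shows "(\<Sum>i \<in> {i \<in> {1..n}. gap n (nu' n k \<epsilon> j) i > 0}. gap n (nu' n k \<epsilon> j) i powr (1 - 2 * \<alpha>))
           \<le> real k * (49/100) powr (1 - 2 * \<alpha>)"
proof -
  let ?g = "gap n (nu' n k \<epsilon> j)" and ?e = "1 - 2 * \<alpha>"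
  let ?S = "{i \<in> {1..n}. ?g i > 0}"
  have sub: "?S \<subseteq> {1..k}"
    using gap_nu'_high by (auto simp: not_less[symmetric])
  have "(\<Sum>i\<in>?S. ?g i powr ?e) \<le> (\<Sum>i\<in>?S. (49/100) powr ?e)"
    using assms gap_nu'_low sub by (intro sum_mono powr_mono2') auto
  also have "\<dots> \<le> (\<Sum>i\<in>{1..k}. (49/100) powr ?e)"
    using sub by (intro sum_mono2) auto
  finally show ?thesis by simp
qed

definition p_base :: real where "p_base = 1/2 + (real n - 1) * \<epsilon>"

definition p_boosted :: real where "p_boosted = 1/2 + (real n + 1) * \<epsilon>"

lemma nu_own_arm:
  assumes "2 \<le> j" "j \<le> k"
  shows "nu n k \<epsilon> 1 j = p_base" "nu n k \<epsilon> j j = p_boosted"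
  using assms by (simp_all add: nu_def p_base_def p_boosted_def)

lemma p_base_p_boosted_bounds: "1/2 \<le> p_base" "p_boosted = p_base + 2 * \<epsilon>" "p_boosted \<le> 51/100"
  using n_ge_1 eps_pos eps_small by (auto simp: p_base_def p_boosted_def algebra_simps)

definition llr :: "bool \<Rightarrow> real" where "llr = bernoulli_llr p_base p_boosted"

definition kl :: real where "kl = bernoulli_kl p_base p_boosted"

lemma kl_bounds: "0 \<le> kl" "kl \<le> 17 * \<epsilon>\<^sup>2"
proof -
  note pq = p_base_p_boosted_bounds
  have p01: "0 < p_base" "p_base < 1" "0 < p_boosted" "p_boosted < 1" using pq eps_pos by auto
  show "0 \<le> kl" using bernoulli_kl_nonneg[OF p01] by (simp add: kl_def)
  have "51/100 * (49/100) \<le> p_boosted * (1 - p_boosted)"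
  proof -
    have "(p_boosted - 49/100) * (51/100 - p_boosted) \<ge> 0"
      using pq eps_pos by (intro mult_nonneg_nonneg) auto
    then show ?thesis by (simp add: algebra_simps)
  qed
  moreover have "(p_boosted - p_base)\<^sup>2 = 4 * \<epsilon>\<^sup>2" using pq by (simp add: power2_eq_square)
  ultimately have "(p_boosted - p_base)\<^sup>2 / (p_boosted * (1 - p_boosted)) \<le> 4 * \<epsilon>\<^sup>2 / (51/100 * (49/100))"
    by (simp only:) (intro divide_left_mono, auto)
  moreover have "kl \<le> (p_boosted - p_base)\<^sup>2 / (p_boosted * (1 - p_boosted))"
    using bernoulli_kl_le_chi_square[OF p01] by (simp add: kl_def)
  moreover have "4 * \<epsilon>\<^sup>2 / (51/100 * (49/100)) \<le> 17 * \<epsilon>\<^sup>2" by simp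
  ultimately show "kl \<le> 17 * \<epsilon>\<^sup>2" by linarith
qed

definition llr_variance :: real where
  "llr_variance = p_base * (llr True + kl)\<^sup>2 + (1 - p_base) * (llr False + kl)\<^sup>2"

lemma llr_variance_le: "llr_variance \<le> 17 * \<epsilon>\<^sup>2"
proof -
  note pq = p_base_p_boosted_bounds
  have p: "0 < p_base" "p_base \<le> p_boosted" "p_boosted < 1" using pq eps_pos by auto
  have "p_base * (1 - p_base) \<le> 1/4"
    using zero_le_power2[of "p_base - 1/2"] by (simp add: power2_eq_square algebra_simps)
  moreover have "(llr True - llr False)\<^sup>2 \<le> (2 * \<epsilon> / (1/2 * (49/100)))\<^sup>2"
  proof (rule power_mono)
    have "llr True - llr False \<le> (p_boosted - p_base) / (p_base * (1 - p_boosted))"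
      using bernoulli_llr_spread(2)[OF p] by (simp add: llr_def)
    also have "\<dots> \<le> 2 * \<epsilon> / (1/2 * (49/100))"
      using pq eps_pos by (simp only: \<open>p_boosted = p_base + 2 * \<epsilon>\<close> add_diff_cancel_left')
        (intro divide_left_mono mult_mono, auto)
    finally show "llr True - llr False \<le> 2 * \<epsilon> / (1/2 * (49/100))" .
    show "0 \<le> llr True - llr False" using bernoulli_llr_spread(1)[OF p] by (simp add: llr_def)
  qed
  ultimately have "p_base * (1 - p_base) * (llr True - llr False)\<^sup>2 \<le> 1/4 * (2 * \<epsilon> / (1/2 * (49/100)))\<^sup>2"
    using p pq by (intro mult_mono) auto
  also have "\<dots> \<le> 17 * \<epsilon>\<^sup>2" by (simp add: power2_eq_square)
  finally show ?thesis
    using bernoulli_llr_variance[of p_base p_boosted] by (simp add: llr_variance_def llr_def kl_def)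
qed

end

section \<open>The choice of \<open>\<epsilon>\<close>\<close>

lemma four_eps_powr_eq:
  fixes \<alpha> k T \<epsilon> :: real
  assumes "0 \<le> \<alpha>" "0 < k" "0 < T" and \<epsilon>: "\<epsilon> = 1/4 * (k / T) powr (1 / (2 + 2 * \<alpha>))"
  shows "(4 * \<epsilon>) powr (2 + 2 * \<alpha>) = k / T"
proof -
  have "(4 * \<epsilon>) powr (2 + 2 * \<alpha>) = (k / T) powr ((1 / (2 + 2 * \<alpha>)) * (2 + 2 * \<alpha>))"
    by (simp add: \<epsilon> powr_powr)
  also have "\<dots> = k / T" using assms by simp
  finally show ?thesis .
qed

lemma four_eps_powr_split:
  fixes \<alpha> \<epsilon> :: real
  assumes "0 < \<epsilon>"
  shows "(4 * \<epsilon>) powr (2 + 2 * \<alpha>) = 16 * 16 powr \<alpha> * \<epsilon>\<^sup>2 * \<epsilon> powr (2 * \<alpha>)"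
proof -
  have "(4::real) powr (2 * \<alpha>) = (4 powr 2) powr \<alpha>" by (simp only: powr_powr)
  then have "(4::real) powr (2 * \<alpha>) = 16 powr \<alpha>" by simp
  moreover have "(4 * \<epsilon>) powr 2 = 16 * \<epsilon>\<^sup>2"
    using assms by (simp add: powr_realpow' power_mult_distrib)
  ultimately show ?thesis
    using assms by (simp add: powr_add powr_mult)
qed

lemma eps_horizon:
  fixes \<alpha> k T \<epsilon> :: real
  assumes "0 \<le> \<alpha>" "0 < k" "0 < T" and \<epsilon>: "\<epsilon> = 1/4 * (k / T) powr (1 / (2 + 2 * \<alpha>))"
  shows "T = k / (16 * 16 powr \<alpha> * \<epsilon>\<^sup>2 * \<epsilon> powr (2 * \<alpha>))"
proof -
  have "0 < \<epsilon>" unfolding \<epsilon> using assms(2,3) by simp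
  then have "k / T = 16 * 16 powr \<alpha> * \<epsilon>\<^sup>2 * \<epsilon> powr (2 * \<alpha>)"
    using four_eps_powr_eq[OF assms] four_eps_powr_split by simp
  then show ?thesis using assms(2,3) \<open>0 < \<epsilon>\<close> by (simp add: field_simps)
qed

lemma eps_coefficient:
  fixes \<alpha> k T \<epsilon> c :: real
  assumes "0 \<le> \<alpha>" "0 < k" "0 < T" and \<epsilon>: "\<epsilon> = 1/4 * (k / T) powr (1 / (2 + 2 * \<alpha>))"
  shows "2 / 16 powr (\<alpha> + 1) * (c * T powr (1 / (\<alpha> + 1)) / k powr (1 + 1 / (\<alpha> + 1))) * k
           = 2 * c / (256 * 16 powr \<alpha> * \<epsilon>\<^sup>2)"
proof -
  have "0 < \<epsilon>" unfolding \<epsilon> using assms(2,3) by simp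
  have "(k / T) powr (1 / (\<alpha> + 1)) = (4 * \<epsilon>) powr ((2 + 2 * \<alpha>) * (1 / (\<alpha> + 1)))"
    by (simp add: four_eps_powr_eq[OF assms, symmetric] powr_powr)
  also have "(2 + 2 * \<alpha>) * (1 / (\<alpha> + 1)) = 2" using assms(1) by (simp add: field_simps)
  also have "(4 * \<epsilon>) powr 2 = 16 * \<epsilon>\<^sup>2"
    using \<open>0 < \<epsilon>\<close> by (simp add: powr_realpow' power_mult_distrib)
  finally have "T powr (1 / (\<alpha> + 1)) = k powr (1 / (\<alpha> + 1)) / (16 * \<epsilon>\<^sup>2)"
    using assms(2,3) \<open>0 < \<epsilon>\<close> by (simp add: powr_divide field_simps)
  moreover have "k powr (1 + 1 / (\<alpha> + 1)) = k * k powr (1 / (\<alpha> + 1))"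
    using assms(1,2) by (simp add: powr_add)
  moreover have "(16::real) powr (\<alpha> + 1) = 16 * 16 powr \<alpha>" by (simp add: powr_add)
  ultimately show ?thesis
    using assms(2) \<open>0 < \<epsilon>\<close> by (simp add: field_simps)
qed

lemma lower_bound_constants:
  fixes \<alpha> \<epsilon> c k T L :: real
  assumes \<alpha>: "1 \<le> \<alpha>" and k: "0 < k" and c: "1 \<le> c" "c \<le> k" and \<epsilon>: "0 < \<epsilon>" "\<epsilon> \<le> 1/300"
    and L: "L * k = 2 * c / (256 * 16 powr \<alpha> * \<epsilon>\<^sup>2)"
    and T: "T = k / (16 * 16 powr \<alpha> * \<epsilon>\<^sup>2 * \<epsilon> powr (2 * \<alpha>))"
  defines "D0 \<equiv> L * k / (49/100) powr (2 * \<alpha>)"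
  shows "26 * \<epsilon>\<^sup>2 * D0 \<le> 6/100 * c"
    and "2 * D0 / T \<le> 1/100"
    and "L * k * \<epsilon> powr (1 - 2 * \<alpha>) = \<epsilon> * T / 2 * (c / (4 * k))"
proof -
  define g :: real where "g = 49/100"
  define S where "S = 16 powr \<alpha> * g powr (2 * \<alpha>)"
  have D0: "D0 = 2 * c / (256 * \<epsilon>\<^sup>2 * S)"
    by (simp add: D0_def L S_def g_def field_simps)
  have S: "16 * g\<^sup>2 \<le> S"
  proof -
    have "S = (16 * g\<^sup>2) powr \<alpha>"
      by (simp add: S_def g_def powr_mult powr_powr powr_realpow' flip: powr_powr)
    moreover have "(16 * g\<^sup>2) powr 1 \<le> (16 * g\<^sup>2) powr \<alpha>"
      using \<alpha> by (intro powr_mono) (auto simp: g_def power2_eq_square)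
    ultimately show ?thesis by (simp add: g_def)
  qed
  have "26 * \<epsilon>\<^sup>2 * D0 = 52 * c / (256 * S)"
    using \<epsilon> by (simp add: D0)
  also have "\<dots> \<le> 52 * c / (256 * (16 * g\<^sup>2))"
    using S c by (intro divide_left_mono mult_left_mono mult_pos_pos) (auto simp: g_def power2_eq_square)
  also have "\<dots> \<le> 6/100 * c" using c by (simp add: g_def power2_eq_square)
  finally show "26 * \<epsilon>\<^sup>2 * D0 \<le> 6/100 * c" .
  have "\<epsilon> powr (2 * \<alpha>) / g powr (2 * \<alpha>) = (\<epsilon> / g) powr (2 * \<alpha>)"
    by (rule powr_divide[symmetric])
  also have "\<dots> \<le> (\<epsilon> / g) powr 2"
    using \<alpha> \<epsilon> by (intro powr_mono') (auto simp: g_def)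
  also have "\<dots> = (\<epsilon> / g)\<^sup>2" using \<epsilon> by (simp add: g_def powr_realpow')
  also have "\<dots> \<le> (1/10)\<^sup>2" using \<epsilon> by (intro power_mono) (auto simp: g_def)
  also have "\<dots> = 1/100" by (simp add: power2_eq_square)
  finally have "\<epsilon> powr (2 * \<alpha>) / g powr (2 * \<alpha>) \<le> 1/100" .
  moreover have "2 * D0 / T = c / (4 * k) * (\<epsilon> powr (2 * \<alpha>) / g powr (2 * \<alpha>))"
    using \<epsilon> k by (simp add: D0 T S_def field_simps)
  ultimately have "2 * D0 / T \<le> c / (4 * k) * (1/100)"
    using c k by (simp only:) (intro mult_left_mono, auto)
  also have "\<dots> \<le> 1/100" using c k by (simp add: field_simps)
  finally show "2 * D0 / T \<le> 1/100" .
  show "L * k * \<epsilon> powr (1 - 2 * \<alpha>) = \<epsilon> * T / 2 * (c / (4 * k))"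
    using \<epsilon> k by (simp add: L T powr_diff field_simps power2_eq_square)
qed

section \<open>The lower bound for a fixed horizon\<close>

locale streaming_lower_bound = hard_family n k \<epsilon> for n k \<epsilon> +
  fixes m :: nat and \<pi> :: policy and T :: nat
  assumes m2: "2 \<le> m" and mk: "m \<le> k" and vp: "valid_policy n m \<pi>" and T_pos: "0 < T"
begin

abbreviation P1 :: "history pmf" where "P1 \<equiv> traj \<pi> (nu n k \<epsilon> 1) T"

definition prefix_len :: "history \<Rightarrow> nat" where "prefix_len h = length (low_prefix k h)"

lemma integrable_P1: "integrable (measure_pmf P1) (f :: history \<Rightarrow> real)"
  by (rule integrable_traj[OF vp])

abbreviation mean_prefix_len :: real where
  "mean_prefix_len \<equiv> measure_pmf.expectation P1 (\<lambda>h. real (prefix_len h))"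

lemma regret_nu'_ge_prefix_len: "49/100 * real (prefix_len h) \<le> regret_of n (nu' n k \<epsilon> j) h"
proof -
  let ?g = "\<lambda>x. gap n (nu' n k \<epsilon> j) (arm x)"
  have "49/100 * real (prefix_len h) = (\<Sum>x\<leftarrow>low_prefix k h. 49/100)"
    by (simp add: prefix_len_def sum_list_triv)
  also have "\<dots> \<le> (\<Sum>x\<leftarrow>low_prefix k h. ?g x)"
  proof (rule sum_list_mono)
    fix x assume "x \<in> set (low_prefix k h)"
    then show "49/100 \<le> ?g x" by (intro gap_nu'_low) (auto simp: low_prefix_def dest: set_takeWhileD)
  qed
  also have "\<dots> \<le> (\<Sum>x\<leftarrow>low_prefix k h. ?g x) + (\<Sum>x\<leftarrow>dropWhile (\<lambda>x. arm x \<le> k) h. ?g x)"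
    by (auto intro!: sum_list_nonneg simp: gap_nu'_nonneg)
  also have "\<dots> = (\<Sum>x\<leftarrow>low_prefix k h @ dropWhile (\<lambda>x. arm x \<le> k) h. ?g x)"
    by simp
  also have "\<dots> = regret_of n (nu' n k \<epsilon> j) h"
    by (simp add: regret_of_def low_prefix_def)
  finally show ?thesis .
qed

lemma expected_regret_nu'_ge: "49/100 * mean_prefix_len \<le> expected_regret n \<pi> (nu' n k \<epsilon> 1) T"
proof -
  have len: "measure_pmf.expectation p (\<lambda>h. real (prefix_len h)) =
      measure_pmf.expectation (map_pmf (low_state k) p) (\<lambda>s. real (length (fst s)))" for p
    by (simp add: prefix_len_def low_state_def)
  have "map_pmf (low_state k) (traj \<pi> (nu' n k \<epsilon> 1) T) = map_pmf (low_state k) P1"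
    by (rule map_pmf_low_state_traj) (simp add: nu'_def)
  then have "measure_pmf.expectation (traj \<pi> (nu' n k \<epsilon> 1) T) (\<lambda>h. real (prefix_len h)) = mean_prefix_len"
    by (simp only: len)
  moreover have "measure_pmf.expectation (traj \<pi> (nu' n k \<epsilon> 1) T) (\<lambda>h. 49/100 * real (prefix_len h))
      \<le> expected_regret n \<pi> (nu' n k \<epsilon> 1) T"
    unfolding expected_regret_def
    by (intro integral_mono integrable_traj[OF vp] regret_nu'_ge_prefix_len)
  ultimately show ?thesis by simp
qed

text \<open>Event that when an arm beyond \<open>k\<close> is pulled for the first time, within the first half of
  the horizon, arm \<open>j\<close> is no longer stored; as it was already read, it is then lost for good.\<close>
definition arm_lost :: "nat \<Rightarrow> history set" where
  "arm_lost j = {h. prefix_len h < length h \<and> 2 * prefix_len h \<le> T \<and> j \<notin> fst (fst (h ! prefix_len h))}"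

lemma high_arm_at_prefix_len: "prefix_len h < length h \<Longrightarrow> k < arm (h ! prefix_len h)"
  using nth_length_takeWhile[of "\<lambda>x. arm x \<le> k" h] by (simp add: prefix_len_def low_prefix_def)

lemma arm_lost_not_pulled:
  assumes hs: "h \<in> set_pmf (traj \<pi> \<mu> T)" and lost: "h \<in> arm_lost j" and "j \<le> k"
    and s: "prefix_len h \<le> s" "s < T"
  shows "arm (h ! s) \<noteq> j"
proof -
  from set_pmf_traj[OF vp hs] have len: "length h = T" and ok: "hist_ok n m h" by auto
  define b where "b = prefix_len h"
  have b: "b < T" "j \<notin> fst (fst (h ! b))" using lost len by (auto simp: arm_lost_def b_def)
  have "arm (h ! b) \<in> fst (fst (h ! b))" using hist_ok_nth(2)[OF ok] b len by simp
  moreover have "config_ok n m (fst (h ! b))" using hist_ok_config_ok[OF ok] b len by simp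
  moreover have "k < arm (h ! b)" using high_arm_at_prefix_len b len by (simp add: b_def)
  ultimately have "j < snd (fst (h ! b))" using \<open>j \<le> k\<close> by (auto simp: config_ok_def)
  then show ?thesis using hist_ok_lost_not_pulled[OF ok _ _ b(2)] s len by (simp add: b_def)
qed

lemma regret_of_nu_nonneg: "j \<in> {1..k} \<Longrightarrow> 0 \<le> regret_of n (nu n k \<epsilon> j) h"
  unfolding regret_of_def by (rule sum_list_nonneg) (auto intro: gap_nu_nonneg)

lemma regret_of_arm_lost:
  assumes j: "j \<in> {1..k}" and hs: "h \<in> set_pmf (traj \<pi> (nu n k \<epsilon> j) T)" and lost: "h \<in> arm_lost j"
  shows "\<epsilon> * real T / 2 \<le> regret_of n (nu n k \<epsilon> j) h"
proof -
  have len: "length h = T" using set_pmf_traj[OF vp hs] by simp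
  define b where "b = prefix_len h"
  have b: "2 * b \<le> T" using lost by (simp add: arm_lost_def b_def)
  let ?g = "\<lambda>s. gap n (nu n k \<epsilon> j) (arm (h ! s))"
  have "\<epsilon> * real T / 2 \<le> real (T - b) * \<epsilon>"
    using b eps_pos by (simp add: of_nat_diff mult_right_mono)
  also have "\<dots> = (\<Sum>s = b..<T. \<epsilon>)" by simp
  also have "\<dots> \<le> (\<Sum>s = b..<T. ?g s)"
    using arm_lost_not_pulled[OF hs lost] j gap_nu_ge_eps by (intro sum_mono) (auto simp: b_def)
  also have "\<dots> \<le> (\<Sum>s = 0..<T. ?g s)"
    using j by (intro sum_mono2) (auto intro: gap_nu_nonneg)
  also have "\<dots> = regret_of n (nu n k \<epsilon> j) h"
    by (simp add: regret_of_def sum_list_sum_nth len)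
  finally show ?thesis .
qed

lemma expected_regret_ge_prob_arm_lost:
  assumes j: "j \<in> {1..k}"
  shows "\<epsilon> * real T / 2 * measure_pmf.prob (traj \<pi> (nu n k \<epsilon> j) T) (arm_lost j)
           \<le> expected_regret n \<pi> (nu n k \<epsilon> j) T"
proof -
  have "\<epsilon> * real T / 2 * measure_pmf.prob (traj \<pi> (nu n k \<epsilon> j) T) (arm_lost j) =
      measure_pmf.expectation (traj \<pi> (nu n k \<epsilon> j) T) (\<lambda>h. \<epsilon> * real T / 2 * indicator (arm_lost j) h)"
    by simp
  also have "\<dots> \<le> expected_regret n \<pi> (nu n k \<epsilon> j) T"
    unfolding expected_regret_def
    using regret_of_arm_lost[OF j] regret_of_nu_nonneg[OF j]
    by (intro integral_mono_AE integrable_traj[OF vp]) (auto simp: AE_measure_pmf_iff indicator_def)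
  finally show ?thesis .
qed

lemma card_arm_lost:
  assumes ok: "hist_ok n m h" and short: "prefix_len h < length h" "2 * prefix_len h \<le> T"
  shows "real (k - m + 1) \<le> (\<Sum>j = 1..k. indicator (arm_lost j) h)"
proof -
  define b where "b = prefix_len h"
  define M where "M = fst (fst (h ! b))"
  have in_M: "arm (h ! b) \<in> M" using hist_ok_nth(2)[OF ok] short by (simp add: M_def b_def)
  have "config_ok n m (fst (h ! b))" using hist_ok_config_ok[OF ok] short by (simp add: b_def)
  then have M: "finite M" "card M \<le> m" by (auto simp: config_ok_def M_def)
  have "{1..k} \<inter> M \<subseteq> M - {arm (h ! b)}"
    using high_arm_at_prefix_len[OF short(1)] by (auto simp: b_def)
  then have "card ({1..k} \<inter> M) \<le> card M - 1"
    using M in_M card_mono[of "M - {arm (h ! b)}"] by simp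
  then have "k - m + 1 \<le> card ({1..k} - M)"
    using M m2 mk by (simp add: card_Diff_subset_Int)
  also have "{1..k} - M = {1..k} \<inter> {j. h \<in> arm_lost j}"
    using short by (auto simp: arm_lost_def M_def b_def)
  also have "real (card \<dots>) = (\<Sum>j = 1..k. indicator (arm_lost j) h)"
    by (simp add: sum_of_bool_eq indicator_def)
  finally show ?thesis by linarith
qed

definition score :: "nat \<Rightarrow> nat \<Rightarrow> bool \<Rightarrow> real" where
  "score j a r = (if a = j then llr r + kl else 0)"

definition pulls :: "nat \<Rightarrow> history \<Rightarrow> nat" where
  "pulls j h = length (filter (\<lambda>x. arm x = j) (low_prefix k h))"

lemma likelihood_ratio_arm_lost:
  assumes j: "2 \<le> j" "j \<le> k" and hs: "h \<in> set_pmf P1" and lost: "h \<in> arm_lost j"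
  shows "likelihood_ratio (nu n k \<epsilon> 1) (nu n k \<epsilon> j) h =
           exp (prefix_score (score j) k h - kl * real (pulls j h))"
proof -
  define g where "g x = (if arm x = j then llr (reward x) else 0)" for x :: "config \<times> nat \<times> bool"
  have "step_likelihood_ratio (nu n k \<epsilon> 1) (nu n k \<epsilon> j) x = exp (g x)" for x
  proof (cases "arm x = j")
    case True
    have "0 < p_base" "p_base < 1" "0 < p_boosted" "p_boosted < 1"
      using p_base_p_boosted_bounds eps_pos by auto
    then show ?thesis using True nu_own_arm[OF j]
      by (simp add: step_likelihood_ratio_def g_def llr_def bernoulli_llr_def)
  next
    case False
    then show ?thesis using nu_01[of 1 "arm x"] j
      by (simp add: step_likelihood_ratio_def g_def nu_eq_nu_1)
  qed
  then have "likelihood_ratio (nu n k \<epsilon> 1) (nu n k \<epsilon> j) h = exp (\<Sum>x\<leftarrow>h. g x)"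
    unfolding likelihood_ratio_def by (rule prod_list_exp)
  also have "(\<Sum>x\<leftarrow>h. g x) = (\<Sum>x\<leftarrow>low_prefix k h. g x)"
  proof -
    have len: "length h = T" using set_pmf_traj[OF vp hs] by simp
    have "g x = 0" if x: "x \<in> set (drop (prefix_len h) h)" for x
    proof -
      obtain i where "i < T - prefix_len h" "x = h ! (prefix_len h + i)"
        using x len by (auto simp: in_set_conv_nth)
      then show ?thesis using arm_lost_not_pulled[OF hs lost j(2), of "prefix_len h + i"]
        by (simp add: g_def)
    qed
    then have "map g (drop (prefix_len h) h) = map (\<lambda>_. 0) (drop (prefix_len h) h)"
      by (intro map_cong) auto
    then have "(\<Sum>x\<leftarrow>drop (prefix_len h) h. g x) = 0" by (simp only:) simp
    moreover have "h = low_prefix k h @ drop (prefix_len h) h"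
      by (metis append_take_drop_id low_prefix_def prefix_len_def takeWhile_eq_take)
    then have "(\<Sum>x\<leftarrow>h. g x) = (\<Sum>x\<leftarrow>low_prefix k h @ drop (prefix_len h) h. g x)"
      by (simp only: flip: \<open>h = low_prefix k h @ drop (prefix_len h) h\<close>)
    ultimately show ?thesis by simp
  qed
  also have "\<dots> = prefix_score (score j) k h - kl * real (pulls j h)"
    by (simp add: g_def score_def prefix_score_def pulls_def sum_list_map_filter'[symmetric]
        sum_list_addf sum_list_triv)
  finally show ?thesis .
qed

lemma expectation_score_sq:
  assumes j: "2 \<le> j" "j \<le> k"
  shows "measure_pmf.expectation P1 (\<lambda>h. (prefix_score (score j) k h)\<^sup>2) =
           llr_variance * measure_pmf.expectation P1 (\<lambda>h. real (pulls j h))"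
proof -
  define V where "V a = (if a = j then llr_variance else 0)" for a
  have \<mu>: "0 \<le> nu n k \<epsilon> 1 a \<and> nu n k \<epsilon> 1 a \<le> 1" for a using nu_01[of 1 a] by simp
  have centred: "nu n k \<epsilon> 1 a * score j a True + (1 - nu n k \<epsilon> 1 a) * score j a False = 0" for a
    using nu_own_arm[OF j] by (simp add: score_def kl_def bernoulli_kl_def llr_def algebra_simps)
  have var: "V a = nu n k \<epsilon> 1 a * (score j a True)\<^sup>2 + (1 - nu n k \<epsilon> 1 a) * (score j a False)\<^sup>2"
    for a using nu_own_arm[OF j] by (simp add: V_def score_def llr_variance_def)
  note sq = expectation_prefix_score_sq[where \<phi> = "score j" and V = V, OF vp \<mu> centred var]
  have "prefix_variance V k = (\<lambda>h. llr_variance * real (pulls j h))"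
    by (simp add: fun_eq_iff prefix_variance_def pulls_def V_def sum_list_map_filter'[symmetric] sum_list_triv)
  then show ?thesis using sq by simp
qed

lemma prob_arm_lost_change_measure:
  assumes j: "2 \<le> j" "j \<le> k"
  shows "measure_pmf.prob P1 (arm_lost j) / 2 - 26 * \<epsilon>\<^sup>2 * measure_pmf.expectation P1 (\<lambda>h. real (pulls j h))
           \<le> measure_pmf.prob (traj \<pi> (nu n k \<epsilon> j) T) (arm_lost j)"
proof -
  let ?A = "arm_lost j" and ?Z = "prefix_score (score j) k" and ?N = "\<lambda>h. real (pulls j h)"
  let ?L = "likelihood_ratio (nu n k \<epsilon> 1) (nu n k \<epsilon> j)"
  have "indicator ?A h / 2 - (?Z h)\<^sup>2 / 2 - kl * ?N h \<le> indicator ?A h * ?L h" if "h \<in> set_pmf P1" for h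
  proof (cases "h \<in> ?A")
    case True then show ?thesis
      using likelihood_ratio_arm_lost[OF j that] exp_diff_ge_quadratic[of "?Z h" "kl * ?N h"] by simp
  next
    case False
    have "0 \<le> kl * ?N h" using kl_bounds(1) by simp
    moreover have "indicator ?A h = (0 :: real)" using False by simp
    ultimately show ?thesis using zero_le_power2[of "?Z h"] by (simp only: mult_zero_left)
  qed
  then have "measure_pmf.expectation P1 (\<lambda>h. indicator ?A h / 2 - (?Z h)\<^sup>2 / 2 - kl * ?N h)
      \<le> measure_pmf.expectation P1 (\<lambda>h. indicator ?A h * ?L h)"
    by (intro integral_mono_AE integrable_P1) (simp add: AE_measure_pmf_iff)
  moreover have "measure_pmf.expectation P1 (\<lambda>h. indicator ?A h / 2 - (?Z h)\<^sup>2 / 2 - kl * ?N h) =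
      measure_pmf.prob P1 ?A / 2 - (llr_variance / 2 + kl) * measure_pmf.expectation P1 ?N"
    using Bochner_Integration.integral_diff[OF integrable_P1 integrable_P1, of "\<lambda>h. indicator ?A h / 2 - (?Z h)\<^sup>2 / 2" "\<lambda>h. kl * ?N h"]
      Bochner_Integration.integral_diff[OF integrable_P1 integrable_P1, of "\<lambda>h. indicator ?A h / 2" "\<lambda>h. (?Z h)\<^sup>2 / 2"]
      expectation_score_sq[OF j]
    by (simp add: ring_distribs)
  moreover have "measure_pmf.expectation P1 (\<lambda>h. indicator ?A h * ?L h) =
      measure_pmf.prob (traj \<pi> (nu n k \<epsilon> j) T) ?A"
    using expectation_traj_change_measure[OF vp, of "nu n k \<epsilon> 1" "nu n k \<epsilon> j" T "indicator ?A"] nu_01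
    by (simp add: less_imp_le)
  moreover have "(llr_variance / 2 + kl) * measure_pmf.expectation P1 ?N \<le> 26 * \<epsilon>\<^sup>2 * measure_pmf.expectation P1 ?N"
    using llr_variance_le kl_bounds by (intro mult_right_mono integral_nonneg_AE) auto
  ultimately show ?thesis by linarith
qed

lemma sum_expected_pulls_le:
  "(\<Sum>j = 1..k. measure_pmf.expectation P1 (\<lambda>h. real (pulls j h))) \<le> mean_prefix_len"
proof -
  have "(\<Sum>j = 1..k. measure_pmf.expectation P1 (\<lambda>h. real (pulls j h))) =
      measure_pmf.expectation P1 (\<lambda>h. real (\<Sum>j = 1..k. pulls j h))"
    unfolding of_nat_sum by (rule Bochner_Integration.integral_sum[symmetric]) (rule integrable_P1)
  also have "\<dots> \<le> mean_prefix_len"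
    unfolding pulls_def prefix_len_def
    by (intro integral_mono integrable_P1) (simp only: of_nat_le_iff sum_length_filter_le[OF finite_atLeastAtMost])
  finally show ?thesis .
qed

lemma sum_prob_arm_lost_base:
  "real (k - m + 1) * (1 - 2 * mean_prefix_len / real T) \<le> (\<Sum>j = 1..k. measure_pmf.prob P1 (arm_lost j))"
proof -
  have "real (k - m + 1) * (1 - 2 * real (prefix_len h) / real T) \<le> (\<Sum>j = 1..k. indicator (arm_lost j) h)"
    if hs: "h \<in> set_pmf P1" for h
  proof (cases "prefix_len h < length h \<and> 2 * prefix_len h \<le> T")
    case True
    have "real (k - m + 1) * (1 - 2 * real (prefix_len h) / real T) \<le> real (k - m + 1)"
      using T_pos by (intro mult_left_le) auto
    then show ?thesis using card_arm_lost[OF _ conjunct1[OF True] conjunct2[OF True]] set_pmf_traj[OF vp hs]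
      by linarith
  next
    case False
    moreover have "prefix_len h \<le> T"
      using set_pmf_traj[OF vp hs] length_takeWhile_le[of _ h] by (auto simp: prefix_len_def low_prefix_def)
    ultimately have "1 - 2 * real (prefix_len h) / real T \<le> 0"
      using set_pmf_traj[OF vp hs] T_pos by (auto simp: field_simps)
    then have "real (k - m + 1) * (1 - 2 * real (prefix_len h) / real T) \<le> 0"
      by (simp add: mult_nonneg_nonpos)
    moreover have "0 \<le> (\<Sum>j = 1..k. indicator (arm_lost j) h :: real)" by (simp add: sum_nonneg)
    ultimately show ?thesis by linarith
  qed
  then have "measure_pmf.expectation P1 (\<lambda>h. real (k - m + 1) * (1 - 2 * real (prefix_len h) / real T))
      \<le> measure_pmf.expectation P1 (\<lambda>h. \<Sum>j = 1..k. indicator (arm_lost j) h)"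
    by (intro integral_mono_AE integrable_P1) (simp add: AE_measure_pmf_iff)
  then show ?thesis
    using Bochner_Integration.integral_diff[OF integrable_P1 integrable_P1, of "\<lambda>_. 1" "\<lambda>h. 2 * real (prefix_len h) / real T"]
      Bochner_Integration.integral_sum[of "{1..k}" P1 "\<lambda>j. indicator (arm_lost j)", OF integrable_P1]
    by simp
qed

lemma sum_prob_arm_lost:
  "real (k - m + 1) / 2 * (1 - 2 * mean_prefix_len / real T) - 26 * \<epsilon>\<^sup>2 * mean_prefix_len
     \<le> (\<Sum>j = 1..k. measure_pmf.prob (traj \<pi> (nu n k \<epsilon> j) T) (arm_lost j))"
proof -
  let ?N = "\<lambda>j. measure_pmf.expectation P1 (\<lambda>h. real (pulls j h))"
  have each: "measure_pmf.prob P1 (arm_lost j) / 2 - 26 * \<epsilon>\<^sup>2 * ?N j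
      \<le> measure_pmf.prob (traj \<pi> (nu n k \<epsilon> j) T) (arm_lost j)" if "j \<in> {1..k}" for j
  proof (cases "j = 1")
    case True
    have "0 \<le> 26 * \<epsilon>\<^sup>2 * ?N 1" by (simp add: integral_nonneg_AE)
    moreover have "0 \<le> measure_pmf.prob P1 (arm_lost 1)" by simp
    ultimately show ?thesis unfolding True by linarith
  qed (use that prob_arm_lost_change_measure in auto)
  have "real (k - m + 1) / 2 * (1 - 2 * mean_prefix_len / real T) - 26 * \<epsilon>\<^sup>2 * mean_prefix_len
      \<le> (\<Sum>j = 1..k. measure_pmf.prob P1 (arm_lost j)) / 2 - 26 * \<epsilon>\<^sup>2 * (\<Sum>j = 1..k. ?N j)"
    using sum_prob_arm_lost_base sum_expected_pulls_le
    by (intro diff_mono mult_left_mono) (auto simp: divide_right_mono)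
  also have "\<dots> = (\<Sum>j = 1..k. measure_pmf.prob P1 (arm_lost j) / 2 - 26 * \<epsilon>\<^sup>2 * ?N j)"
    by (simp add: sum_subtractf sum_divide_distrib sum_distrib_left)
  also have "\<dots> \<le> (\<Sum>j = 1..k. measure_pmf.prob (traj \<pi> (nu n k \<epsilon> j) T) (arm_lost j))"
    by (rule sum_mono) (rule each)
  finally show ?thesis .
qed

lemma exists_likely_arm_lost:
  assumes "26 * \<epsilon>\<^sup>2 * mean_prefix_len \<le> 6/100 * real (k - m + 1)"
    and "2 * mean_prefix_len / real T \<le> 1/100"
  shows "\<exists>j\<in>{1..k}. real (k - m + 1) / (4 * real k) < measure_pmf.prob (traj \<pi> (nu n k \<epsilon> j) T) (arm_lost j)"
proof -
  define c where "c = real (k - m + 1)"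
  define x where "x = 1 - 2 * mean_prefix_len / real T"
  have "c / 2 * (99/100) \<le> c / 2 * x"
    using assms(2) by (intro mult_left_mono) (auto simp: c_def x_def)
  moreover have "1 \<le> c" by (simp add: c_def)
  ultimately have lower: "c / 4 < (\<Sum>j = 1..k. measure_pmf.prob (traj \<pi> (nu n k \<epsilon> j) T) (arm_lost j))"
    using sum_prob_arm_lost[folded c_def x_def] assms(1)[folded c_def] by linarith
  show ?thesis
  proof (rule ccontr)
    assume "\<not> ?thesis"
    then have "(\<Sum>j = 1..k. measure_pmf.prob (traj \<pi> (nu n k \<epsilon> j) T) (arm_lost j))
        \<le> (\<Sum>j = 1..k. real (k - m + 1) / (4 * real k))"
      by (intro sum_mono) (simp add: not_less)
    also have "\<dots> = real (k - m + 1) / 4" using k2 by simp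
    finally show False using lower by (simp add: c_def)
  qed
qed

lemma regret_nu'_exceeds:
  assumes "1 \<le> \<alpha>" "0 \<le> L" and long: "L * real k * (49/100) powr (1 - 2 * \<alpha>) < 49/100 * mean_prefix_len"
  shows "L * (\<Sum>i \<in> {i \<in> {1..n}. gap n (nu' n k \<epsilon> 1) i > 0}. gap n (nu' n k \<epsilon> 1) i powr (1 - 2 * \<alpha>))
           < expected_regret n \<pi> (nu' n k \<epsilon> 1) T"
proof -
  have "L * (\<Sum>i \<in> {i \<in> {1..n}. gap n (nu' n k \<epsilon> 1) i > 0}. gap n (nu' n k \<epsilon> 1) i powr (1 - 2 * \<alpha>))
      \<le> L * (real k * (49/100) powr (1 - 2 * \<alpha>))"
    using sum_gap_powr_nu'_le[OF assms(1)] assms(2) by (rule mult_left_mono)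
  also have "\<dots> < 49/100 * mean_prefix_len" using long by simp
  also have "\<dots> \<le> expected_regret n \<pi> (nu' n k \<epsilon> 1) T" by (rule expected_regret_nu'_ge)
  finally show ?thesis .
qed

lemma regret_nu_exceeds:
  assumes "1 \<le> \<alpha>" "0 \<le> L" and j: "j \<in> {1..k}"
    and likely: "L * real k * \<epsilon> powr (1 - 2 * \<alpha>)
                   < \<epsilon> * real T / 2 * measure_pmf.prob (traj \<pi> (nu n k \<epsilon> j) T) (arm_lost j)"
  shows "L * (\<Sum>i \<in> {i \<in> {1..n}. gap n (nu n k \<epsilon> j) i > 0}. gap n (nu n k \<epsilon> j) i powr (1 - 2 * \<alpha>))
           < expected_regret n \<pi> (nu n k \<epsilon> j) T"
proof -
  have "L * (\<Sum>i \<in> {i \<in> {1..n}. gap n (nu n k \<epsilon> j) i > 0}. gap n (nu n k \<epsilon> j) i powr (1 - 2 * \<alpha>))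
      \<le> L * (real k * \<epsilon> powr (1 - 2 * \<alpha>))"
    using sum_gap_powr_nu_le[OF assms(1) j] assms(2) by (rule mult_left_mono)
  also have "\<dots> < \<epsilon> * real T / 2 * measure_pmf.prob (traj \<pi> (nu n k \<epsilon> j) T) (arm_lost j)"
    using likely by simp
  also have "\<dots> \<le> expected_regret n \<pi> (nu n k \<epsilon> j) T" by (rule expected_regret_ge_prob_arm_lost[OF j])
  finally show ?thesis .
qed

lemma regret_lower_bound:
  assumes \<alpha>: "1 \<le> \<alpha>" and \<epsilon>: "\<epsilon> = eps \<alpha> k T"
  shows "\<exists>\<nu> \<in> hard_instances n k \<epsilon>.
           expected_regret n \<pi> \<nu> T >
             2 / 16 powr (\<alpha> + 1)
             * ((real k - real m + 1) * real T powr (1 / (\<alpha> + 1))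
                / real k powr (1 + 1 / (\<alpha> + 1)))
             * (\<Sum>i \<in> {i \<in> {1..n}. gap n \<nu> i > 0}. gap n \<nu> i powr (1 - 2 * \<alpha>))"
proof -
  define c where "c = real (k - m + 1)"
  define L where "L = 2 / 16 powr (\<alpha> + 1) * (c * real T powr (1 / (\<alpha> + 1)) / real k powr (1 + 1 / (\<alpha> + 1)))"
  define D0 where "D0 = L * real k / (49/100) powr (2 * \<alpha>)"
  have c: "1 \<le> c" "c \<le> real k" "c = real k - real m + 1" using m2 mk by (auto simp: c_def of_nat_diff)
  have L0: "0 \<le> L" using c by (simp add: L_def)
  have k0: "0 < real k" and T0: "0 < real T" using k2 T_pos by auto
  have \<epsilon>_eq: "\<epsilon> = 1/4 * (real k / real T) powr (1 / (2 + 2 * \<alpha>))" by (simp add: \<epsilon> eps_def)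
  have "4 * \<epsilon> \<le> (real n + 1) * \<epsilon>" using kn k2 eps_pos by (intro mult_right_mono) auto
  then have \<epsilon>_small: "\<epsilon> \<le> 1/300" using eps_small by simp
  have \<alpha>0: "0 \<le> \<alpha>" using \<alpha> by simp
  have LK: "L * real k = 2 * c / (256 * 16 powr \<alpha> * \<epsilon>\<^sup>2)"
    unfolding L_def by (rule eps_coefficient[OF \<alpha>0 k0 T0 \<epsilon>_eq])
  note TK = eps_horizon[OF \<alpha>0 k0 T0 \<epsilon>_eq]
  note constants = lower_bound_constants[OF \<alpha> k0 c(1) c(2) eps_pos \<epsilon>_small LK TK, folded D0_def]
  show ?thesis
  proof (cases "D0 < mean_prefix_len")
    case True
    have "L * real k * (49/100) powr (1 - 2 * \<alpha>) = 49/100 * D0"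
      by (simp add: D0_def powr_diff)
    then have "L * (\<Sum>i \<in> {i \<in> {1..n}. gap n (nu' n k \<epsilon> 1) i > 0}. gap n (nu' n k \<epsilon> 1) i powr (1 - 2 * \<alpha>))
        < expected_regret n \<pi> (nu' n k \<epsilon> 1) T"
      using True by (intro regret_nu'_exceeds[OF \<alpha> L0]) simp
    moreover have "nu' n k \<epsilon> 1 \<in> hard_instances n k \<epsilon>" using k2 by (auto simp: hard_instances_def)
    ultimately show ?thesis by (auto simp: L_def c(3))
  next
    case False
    then have "26 * \<epsilon>\<^sup>2 * mean_prefix_len \<le> 26 * \<epsilon>\<^sup>2 * D0"
      "2 * mean_prefix_len / real T \<le> 2 * D0 / real T"
      using T0 by (auto intro: mult_left_mono divide_right_mono)
    then have "26 * \<epsilon>\<^sup>2 * mean_prefix_len \<le> 6/100 * real (k - m + 1)"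
      "2 * mean_prefix_len / real T \<le> 1/100"
      using constants(1,2) by (auto simp: c_def)
    then obtain j where j: "j \<in> {1..k}"
      and likely: "c / (4 * real k) < measure_pmf.prob (traj \<pi> (nu n k \<epsilon> j) T) (arm_lost j)"
      using exists_likely_arm_lost by (auto simp: c_def)
    have "L * real k * \<epsilon> powr (1 - 2 * \<alpha>)
        < \<epsilon> * real T / 2 * measure_pmf.prob (traj \<pi> (nu n k \<epsilon> j) T) (arm_lost j)"
      unfolding constants(3) using likely eps_pos T0 by (intro mult_strict_left_mono) auto
    then have "L * (\<Sum>i \<in> {i \<in> {1..n}. gap n (nu n k \<epsilon> j) i > 0}. gap n (nu n k \<epsilon> j) i powr (1 - 2 * \<alpha>))
        < expected_regret n \<pi> (nu n k \<epsilon> j) T"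
      by (rule regret_nu_exceeds[OF \<alpha> L0 j])
    moreover have "nu n k \<epsilon> j \<in> hard_instances n k \<epsilon>" using j by (auto simp: hard_instances_def)
    ultimately show ?thesis by (auto simp: L_def c(3))
  qed
qed

end

lemma eps_le_of_large_horizon:
  assumes "0 < r" "0 \<le> \<alpha>" "0 < T" and large: "real k / r powr (2 + 2 * \<alpha>) \<le> real T"
  shows "eps \<alpha> k T \<le> r / 4"
proof -
  have "real k / real T \<le> r powr (2 + 2 * \<alpha>)"
    using large assms(1,3) by (simp add: field_simps)
  then have "(real k / real T) powr (1 / (2 + 2 * \<alpha>)) \<le> (r powr (2 + 2 * \<alpha>)) powr (1 / (2 + 2 * \<alpha>))"
    using assms(2) by (intro powr_mono2) auto
  also have "\<dots> = r" using assms(1,2) by (simp add: powr_powr)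
  finally show ?thesis by (simp add: eps_def)
qed

theorem theorem4p1:
  fixes \<alpha> :: real and n m k :: nat and A :: "nat \<Rightarrow> policy"
  assumes "\<alpha> \<ge> 1" and "2 \<le> m" and "m \<le> k" and "k < n"
    and "\<And>T. valid_policy n m (A T)"
  shows "\<exists>T0. \<forall>T\<ge>T0. \<exists>\<nu> \<in> hard_instances n k (eps \<alpha> k T).
           expected_regret n (A T) \<nu> T >
             2 / 16 powr (\<alpha> + 1)
             * ((real k - real m + 1) * real T powr (1 / (\<alpha> + 1))
                / real k powr (1 + 1 / (\<alpha> + 1)))
             * (\<Sum>i \<in> {i \<in> {1..n}. gap n \<nu> i > 0}. gap n \<nu> i powr (1 - 2 * \<alpha>))"
proof -
  define r :: real where "r = 4 / (100 * (real n + 1))"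
  have "streaming_lower_bound n k (eps \<alpha> k T) m (A T) T"
    if T: "nat \<lceil>real k / r powr (2 + 2 * \<alpha>)\<rceil> + 1 \<le> T" for T
  proof -
    from T have "0 < T" "real k / r powr (2 + 2 * \<alpha>) \<le> real T" by linarith+
    then have "eps \<alpha> k T \<le> r / 4"
      using assms(1) by (intro eps_le_of_large_horizon) (auto simp: r_def)
    then have "(real n + 1) * eps \<alpha> k T \<le> 1/100"
      by (simp add: r_def field_simps)
    moreover have "0 < eps \<alpha> k T" using assms \<open>0 < T\<close> by (simp add: eps_def)
    ultimately show ?thesis
      using assms \<open>0 < T\<close> by unfold_locales auto
  qed
  then show ?thesis
    using streaming_lower_bound.regret_lower_bound[OF _ assms(1) HOL.refl] by blast
qed

end
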